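(* Define $p_0=1$, $q_0=2$, and for $k\ge1$, $p_k=2q_{k-1}$ and $q_k=3q_{k-1}-1$. Let $T_k=\{p_k,p_k+1,\ldots,q_k\}$ and $T=\bigcup_{k\ge0}T_k$. For each $k$, let $\tau_k$ be a permutation of $T_k$ containing no 3-term arithmetic progression as a subsequence. Then: (a) the concatenation $\tau_0\tau_1\tau_2\cdots$ contains no 3-term arithmetic progression as a subsequence, so $T$ is 3-free; (b) $\overline{d}(T)=1/2$ and $\underline{d}(T)=1/4$.
   Context: A sequence contains a $k$-term arithmetic progression as a subsequence if there are positions $i_1<\cdots<i_k$ whose entries satisfy $a_{i_{m+1}}-a_{i_m}=d$ for all $m$, for some fixed $d\neq0$ (positive or negative). A set $S$ of positive integers is $n$-free if its elements can be listed in a sequence, each element appearing exactly once, that contains no $n$-term arithmetic progression as a subsequence. For $S\subseteq\mathbb{Z}_{>0}$ with $A(n)=|S\cap[1,n]|$, the upper density is $\overline{d}(S)=\limsup_{n\to\infty}A(n)/n$ and the lower density is $\underline{d}(S)=\liminf_{n\to\infty}A(n)/n$. Every finite set of consecutive integers admits a permutation with no 3-term arithmetic progression as a subsequence. *)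

theory Defs
  imports Complex_Main "HOL-Library.Liminf_Limsup" "HOL-Library.Extended_Real"
begin

definition has_AP :: "nat \<Rightarrow> (nat \<Rightarrow> nat) \<Rightarrow> nat set \<Rightarrow> bool" where
  "has_AP k a I \<longleftrightarrow>
     (\<exists>i :: nat \<Rightarrow> nat. \<exists>d :: int. d \<noteq> 0 \<and>
        (\<forall>m. Suc m < k \<longrightarrow> i m < i (Suc m)) \<and>
        (\<forall>m < k. i m \<in> I) \<and>
        (\<forall>m. Suc m < k \<longrightarrow> int (a (i (Suc m))) - int (a (i m)) = d))"

definition list_has_AP :: "nat \<Rightarrow> nat list \<Rightarrow> bool" where
  "list_has_AP k xs \<longleftrightarrow> has_AP k (\<lambda>j. xs ! j) {..<length xs}"

definition n_free :: "nat \<Rightarrow> nat set \<Rightarrow> bool" where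
  "n_free n S \<longleftrightarrow>
     (\<exists>xs. distinct xs \<and> set xs = S \<and> \<not> list_has_AP n xs) \<or>
     (\<exists>a :: nat \<Rightarrow> nat. bij_betw a UNIV S \<and> \<not> has_AP n a UNIV)"

definition counting :: "nat set \<Rightarrow> nat \<Rightarrow> nat" where
  "counting S n = card (S \<inter> {1..n})"

definition upper_density :: "nat set \<Rightarrow> ereal" where
  "upper_density S = limsup (\<lambda>n. ereal (real (counting S n) / real n))"

definition lower_density :: "nat set \<Rightarrow> ereal" where
  "lower_density S = liminf (\<lambda>n. ereal (real (counting S n) / real n))"

fun qseq :: "nat \<Rightarrow> nat" where
  "qseq 0 = 2"
| "qseq (Suc k) = 3 * qseq k - 1"

fun pseq :: "nat \<Rightarrow> nat" where
  "pseq 0 = 1"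
| "pseq (Suc k) = 2 * qseq k"

definition Tblock :: "nat \<Rightarrow> nat set" where
  "Tblock k = {pseq k..qseq k}"

definition Tset :: "nat set" where
  "Tset = (\<Union>k. Tblock k)"

text \<open>Infinite concatenation tau 0 @ tau 1 @ tau 2 @ ... of (nonempty) lists,
as a sequence indexed by positions.\<close>
definition offset :: "(nat \<Rightarrow> 'a list) \<Rightarrow> nat \<Rightarrow> nat" where
  "offset \<tau> k = (\<Sum>j<k. length (\<tau> j))"

definition concat_inf :: "(nat \<Rightarrow> 'a list) \<Rightarrow> nat \<Rightarrow> 'a" where
  "concat_inf \<tau> i = (let k = (LEAST k. i < offset \<tau> (Suc k)) in \<tau> k ! (i - offset \<tau> k))"

end

theory Submission
  imports Defs "HOL-Real_Asymp.Real_Asymp"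
begin

(* Block T_(k+1) starts at p_(k+1) = 2 q_k and is shorter than the gap q_k separating it from
   T_k.  Take a 3-term progression x, y, z in the order of the concatenation, so the blocks
   of x, y, z are weakly increasing.  If they all coincide, the progression lives inside
   one tau_k.  If z lies in a later block than y, then z >= 2 y > 2 y - x.  Otherwise only x
   lies in an earlier block, and y - x >= y / 2 exceeds the width of the block of y and z.

   For the densities, 2 q_k = 3^(k+1) + 1 and 4 A(q_k) = 3^(k+1) + 2 k + 5.  Between q_k and
   q_(k+1) the count stays constant up to 3^(k+1) and then grows with slope 1, so
   1/4 <= A(n)/n <= 1/2 + O(log n / n), the ratio is at least 1/2 at n = q_k and tends to
   1/4 along n = 3^(k+1). *)

section \<open>The blocks\<close>

lemma qseq_ge_2: "qseq k \<ge> 2"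
  by (induction k) auto

lemma qseq_closed_form: "2 * qseq k = 3 ^ Suc k + 1"
  by (induction k) (use qseq_ge_2 in auto)

lemma pseq_Suc_closed_form: "pseq (Suc k) = 3 ^ Suc k + 1"
  using qseq_closed_form[of k] by simp

lemma strict_mono_qseq: "strict_mono qseq"
proof -
  have "qseq k < qseq (Suc k)" for k
    using qseq_ge_2[of k] by simp
  then show ?thesis by (simp add: strict_mono_Suc_iff)
qed

lemma pseq_pos: "pseq k > 0"
proof (cases k)
  case (Suc m)
  then show ?thesis using qseq_ge_2[of m] by simp
qed simp

lemma pseq_le_qseq: "pseq k \<le> qseq k"
proof (cases k)
  case (Suc m)
  then show ?thesis using qseq_ge_2[of m] by simp
qed simp

lemma qseq_less_pseq_Suc: "qseq k < pseq (Suc k)"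
  using qseq_ge_2[of k] by simp

lemma Tblock_less_double:
  assumes "j < k" "x \<in> Tblock j" "y \<in> Tblock k"
  shows "2 * x \<le> y"
proof -
  obtain m where m: "k = Suc m" "j \<le> m"
    using assms(1) by (cases k) auto
  have "x \<le> qseq m"
    using assms(2) strict_mono_leD[OF strict_mono_qseq m(2)] by (auto simp: Tblock_def)
  with assms(3) m(1) show ?thesis
    by (auto simp: Tblock_def)
qed

lemma Tblock_pos: "x \<in> Tblock k \<Longrightarrow> 0 < x"
  using pseq_pos[of k] by (simp add: Tblock_def)

lemma Tblock_disjoint:
  assumes "j \<noteq> k"
  shows "Tblock j \<inter> Tblock k = {}"
proof (rule ccontr)
  assume "Tblock j \<inter> Tblock k \<noteq> {}"
  then obtain x where x: "x \<in> Tblock j" "x \<in> Tblock k" by blast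
  have "2 * x \<le> x"
  proof (cases "j < k")
    case True show ?thesis by (rule Tblock_less_double[OF True x])
  next
    case False
    with assms have "k < j" by simp
    then show ?thesis by (rule Tblock_less_double[OF _ x(2) x(1)])
  qed
  with Tblock_pos[OF x(1)] show False by simp
qed

lemma Tblock_width: "2 * (qseq (Suc k) - pseq (Suc k)) < pseq (Suc k)"
  using qseq_ge_2[of k] by simp

lemma Tblock_no_AP_3_across:
  assumes k: "k0 \<le> k1" "k1 \<le> k2" "k0 < k2"
    and xyz: "x \<in> Tblock k0" "y \<in> Tblock k1" "z \<in> Tblock k2"
  shows "x + z \<noteq> 2 * y"
proof (cases "k1 < k2")
  case True
  then have "2 * y \<le> z"
    by (rule Tblock_less_double[OF _ xyz(2,3)])
  with Tblock_pos[OF xyz(1)] show ?thesis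
    by simp
next
  case False
  with k obtain m where m: "k1 = Suc m" "k2 = k1" "k0 < k1"
    by (cases k1) auto
  have "2 * x \<le> y"
    using Tblock_less_double[OF m(3) xyz(1,2)] .
  moreover have "pseq k1 \<le> y" "z \<le> qseq k1"
    using xyz(2,3) m(2) by (simp_all add: Tblock_def)
  ultimately show ?thesis
    using Tblock_width[of m, folded m(1)] pseq_le_qseq[of k1] by linarith
qed

section \<open>Counting function and densities\<close>

lemma Tset_between_qseq:
  assumes "qseq k \<le> n" "n \<le> qseq (Suc k)"
  shows "Tset \<inter> {1..n} = (Tset \<inter> {1..qseq k}) \<union> {pseq (Suc k)..n}"
proof (intro equalityI subsetI)
  fix x assume x: "x \<in> Tset \<inter> {1..n}"
  then obtain j where j: "x \<in> Tblock j"
    by (auto simp: Tset_def)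
  show "x \<in> (Tset \<inter> {1..qseq k}) \<union> {pseq (Suc k)..n}"
  proof (cases "j \<le> k")
    case True
    then show ?thesis
      using x j strict_mono_leD[OF strict_mono_qseq True] by (auto simp: Tblock_def)
  next
    case False
    then consider "j = Suc k" | "Suc k < j" by linarith
    then show ?thesis
    proof cases
      case 1
      then show ?thesis using x j by (auto simp: Tblock_def)
    next
      case 2
      have "qseq (Suc k) \<in> Tblock (Suc k)"
        using pseq_le_qseq by (simp add: Tblock_def)
      then have "2 * qseq (Suc k) \<le> x"
        by (rule Tblock_less_double[OF 2 _ j])
      moreover have "x \<le> n" using x by simp
      ultimately show ?thesis using assms(2) qseq_ge_2[of "Suc k"] by linarith
    qed
  qed
next
  fix x assume x: "x \<in> (Tset \<inter> {1..qseq k}) \<union> {pseq (Suc k)..n}"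
  have "{pseq (Suc k)..n} \<subseteq> Tblock (Suc k)"
    using assms(2) by (auto simp: Tblock_def)
  then have "x \<in> Tset"
    using x unfolding Tset_def by blast
  then show "x \<in> Tset \<inter> {1..n}"
    using x assms(1) pseq_pos[of "Suc k"] by auto
qed

lemma counting_Tset_between_qseq:
  assumes "qseq k \<le> n" "n \<le> qseq (Suc k)"
  shows "counting Tset n = counting Tset (qseq k) + (n + 1 - pseq (Suc k))"
proof -
  have "(Tset \<inter> {1..qseq k}) \<inter> {pseq (Suc k)..n} = {}"
    using qseq_less_pseq_Suc[of k] by auto
  then show ?thesis
    unfolding counting_def Tset_between_qseq[OF assms] by (simp add: card_Un_disjoint)
qed

lemma counting_Tset_qseq: "4 * counting Tset (qseq k) = 3 ^ Suc k + 2 * k + 5"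
proof (induction k)
  case 0
  have "Tblock 0 = {1..2}"
    by (simp add: Tblock_def)
  then have "Tset \<inter> {1..2} = {1..2}"
    unfolding Tset_def by blast
  then show ?case by (simp add: counting_def)
next
  case (Suc k)
  have "counting Tset (qseq (Suc k)) = counting Tset (qseq k) + qseq k"
    using counting_Tset_between_qseq[of k "qseq (Suc k)"] strict_mono_qseq qseq_ge_2[of k]
    by (simp add: strict_mono_Suc_iff)
  with Suc qseq_closed_form[of k] show ?case by simp
qed

lemma qseq_bracket:
  assumes "2 \<le> n"
  obtains k where "qseq k \<le> n" "n < qseq (Suc k)"
proof -
  have "n < qseq (Suc n)"
    using seq_suble[OF strict_mono_qseq, of "Suc n"] by simp
  moreover have "\<not> n < qseq 0"
    using assms by simp
  ultimately obtain k where "\<not> n < qseq k" "n < qseq (Suc k)"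
    using ex_least_nat_less[of "\<lambda>k. n < qseq k"] by blast
  then show thesis
    by (intro that) simp_all
qed

lemma counting_Tset_ratio_bounds:
  assumes "2 \<le> n"
  shows "1/4 \<le> real (counting Tset n) / real n"
    and "real (counting Tset n) / real n \<le> 1/2 + (log 3 (2 * real n) + 2) / (2 * real n)"
proof -
  have n: "real n > 0"
    using assms by simp
  obtain k where k: "qseq k \<le> n" "n < qseq (Suc k)"
    using qseq_bracket[OF assms] .
  define X :: nat where "X = 3 ^ Suc k"
  have count: "counting Tset n = counting Tset (qseq k) + (n + 1 - (X + 1))"
    using counting_Tset_between_qseq[of k n] k pseq_Suc_closed_form[of k] by (simp add: X_def)
  have count_q: "4 * counting Tset (qseq k) = X + 2 * k + 5"
    using counting_Tset_qseq[of k] by (simp add: X_def)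
  have q: "2 * qseq k = X + 1" "2 * qseq (Suc k) = 3 * X + 1"
    using qseq_closed_form[of k] qseq_closed_form[of "Suc k"] by (simp_all add: X_def)
  have "n \<le> 4 * counting Tset n"
    using count count_q q k by linarith
  then show "1/4 \<le> real (counting Tset n) / real n"
    using n by (simp add: field_simps)
  have "real (3 ^ Suc k) \<le> real (2 * n)"
    using q(1) k(1) unfolding X_def of_nat_le_iff by linarith
  then have "(3::real) ^ Suc k \<le> 2 * real n"
    by simp
  then have "real (Suc k) \<le> log 3 (2 * real n)"
    by (rule le_log_of_power) simp
  moreover have "2 * counting Tset n \<le> n + k + 3"
    using count count_q q k by linarith
  ultimately have "2 * real (counting Tset n) \<le> real n + log 3 (2 * real n) + 2"
    by linarith
  then show "real (counting Tset n) / real n \<le> 1/2 + (log 3 (2 * real n) + 2) / (2 * real n)"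
    using n by (simp add: field_simps)
qed

lemma counting_Tset_ratio_qseq: "1/2 \<le> real (counting Tset (qseq k)) / real (qseq k)"
proof -
  have "qseq k \<le> 2 * counting Tset (qseq k)"
    using counting_Tset_qseq[of k] qseq_closed_form[of k] by linarith
  then show ?thesis
    using qseq_ge_2[of k] by (simp add: field_simps)
qed

lemma counting_Tset_3_power: "4 * counting Tset (3 ^ Suc k) = 3 ^ Suc k + 2 * k + 5"
proof -
  have "qseq k \<le> 3 ^ Suc k" "3 ^ Suc k \<le> qseq (Suc k)"
    using qseq_closed_form[of k] qseq_closed_form[of "Suc k"] by simp_all
  from counting_Tset_between_qseq[OF this]
  have "counting Tset (3 ^ Suc k) = counting Tset (qseq k)"
    using pseq_Suc_closed_form[of k] by simp
  then show ?thesis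
    using counting_Tset_qseq[of k] by simp
qed

lemma upper_density_Tset: "upper_density Tset = ereal (1/2)"
proof (rule antisym)
  let ?r = "\<lambda>n. ereal (real (counting Tset n) / real n)"
  let ?bound = "\<lambda>n. 1/2 + (log 3 (2 * real n) + 2) / (2 * real n)"
  have "\<forall>\<^sub>F n in sequentially. ?r n \<le> ereal (?bound n)"
    using eventually_ge_at_top[of 2]
    by eventually_elim (simp only: ereal_less_eq(3) counting_Tset_ratio_bounds(2))
  then have "upper_density Tset \<le> limsup (\<lambda>n. ereal (?bound n))"
    unfolding upper_density_def by (rule Limsup_mono)
  also have "\<dots> = ereal (1/2)"
  proof (rule lim_imp_Limsup[OF trivial_limit_sequentially], rule tendsto_ereal)
    show "?bound \<longlonglongrightarrow> 1/2" by real_asymp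
  qed
  finally show "upper_density Tset \<le> ereal (1/2)" .
  have "ereal (1/2) \<le> limsup (?r \<circ> qseq)"
    using counting_Tset_ratio_qseq by (intro le_Limsup always_eventually allI) auto
  also have "\<dots> \<le> upper_density Tset"
    unfolding upper_density_def by (rule limsup_subseq_mono[OF strict_mono_qseq])
  finally show "ereal (1/2) \<le> upper_density Tset" .
qed

lemma lower_density_Tset: "lower_density Tset = ereal (1/4)"
proof (rule antisym)
  let ?r = "\<lambda>n. ereal (real (counting Tset n) / real n)"
  have "strict_mono (\<lambda>k. 3 ^ Suc k :: nat)"
    by (simp add: strict_mono_Suc_iff)
  then have "lower_density Tset \<le> liminf (?r \<circ> (\<lambda>k. 3 ^ Suc k))"
    unfolding lower_density_def by (rule liminf_subseq_mono)
  also have "\<dots> = ereal (1/4)"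
  proof (rule lim_imp_Liminf[OF trivial_limit_sequentially])
    have "?r \<circ> (\<lambda>k. 3 ^ Suc k) = (\<lambda>k. ereal ((3 ^ Suc k + 2 * real k + 5) / (4 * 3 ^ Suc k)))"
    proof
      fix k
      have "real (4 * counting Tset (3 ^ Suc k)) = real (3 ^ Suc k + 2 * k + 5)"
        by (simp only: counting_Tset_3_power)
      then show "(?r \<circ> (\<lambda>k. 3 ^ Suc k)) k = ereal ((3 ^ Suc k + 2 * real k + 5) / (4 * 3 ^ Suc k))"
        by (simp add: field_simps)
    qed
    then show "(?r \<circ> (\<lambda>k. 3 ^ Suc k)) \<longlonglongrightarrow> ereal (1/4)"
      by (simp only:) (rule tendsto_ereal, real_asymp)
  qed
  finally show "lower_density Tset \<le> ereal (1/4)" .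
  have "\<forall>\<^sub>F n in sequentially. ereal (1/4) \<le> ?r n"
    using eventually_ge_at_top[of 2]
    by eventually_elim (simp only: ereal_less_eq(3) counting_Tset_ratio_bounds(1))
  then show "ereal (1/4) \<le> lower_density Tset"
    unfolding lower_density_def by (rule Liminf_bounded)
qed

section \<open>Progressions in concatenations of lists\<close>

lemma has_AP_3_iff:
  "has_AP 3 a I \<longleftrightarrow>
     (\<exists>i j l. i < j \<and> j < l \<and> i \<in> I \<and> j \<in> I \<and> l \<in> I \<and> a i \<noteq> a j \<and> a i + a l = 2 * a j)"
  (is "_ \<longleftrightarrow> ?progression")
proof
  assume "has_AP 3 a I"
  then obtain idx :: "nat \<Rightarrow> nat" and d :: int where
    "d \<noteq> 0" and "\<forall>m. Suc m < 3 \<longrightarrow> idx m < idx (Suc m)" and "\<forall>m<3. idx m \<in> I"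
    and "\<forall>m. Suc m < 3 \<longrightarrow> int (a (idx (Suc m))) - int (a (idx m)) = d"
    unfolding has_AP_def by blast
  then have "idx 0 < idx 1" "idx 1 < idx 2" "idx 0 \<in> I" "idx 1 \<in> I" "idx 2 \<in> I"
    and "int (a (idx 1)) - int (a (idx 0)) = d" "int (a (idx 2)) - int (a (idx 1)) = d"
    by (simp_all add: numeral_2_eq_2 numeral_3_eq_3)
  with \<open>d \<noteq> 0\<close> show ?progression
    by (intro exI[of _ "idx 0"] exI[of _ "idx 1"] exI[of _ "idx 2"]) auto
next
  assume ?progression
  then obtain i j l where "i < j" "j < l" "i \<in> I" "j \<in> I" "l \<in> I" "a i \<noteq> a j" "a i + a l = 2 * a j"
    by blast
  then show "has_AP 3 a I"
    unfolding has_AP_def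
    by (intro exI[of _ "\<lambda>m. if m = 0 then i else if m = 1 then j else l"]
        exI[of _ "int (a j) - int (a i)"]) (auto simp: numeral_3_eq_3 less_Suc_eq)
qed

lemma offset_Suc: "offset \<tau> (Suc k) = offset \<tau> k + length (\<tau> k)"
  by (simp add: offset_def)

lemma mono_offset: "mono (offset \<tau>)"
  by (rule incseq_SucI) (simp add: offset_Suc)

lemma strict_mono_offset:
  assumes "\<And>k. \<tau> k \<noteq> []"
  shows "strict_mono (offset \<tau>)"
  unfolding strict_mono_Suc_iff by (simp add: offset_Suc assms)

lemma offset_add_less_offset_SucD:
  assumes "offset \<tau> k + j < offset \<tau> (Suc k')"
  shows "k \<le> k'"
proof (rule ccontr)
  assume "\<not> k \<le> k'"
  then have "Suc k' \<le> k"
    by simp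
  then have "offset \<tau> (Suc k') \<le> offset \<tau> k"
    by (rule monoD[OF mono_offset])
  with assms show False
    by simp
qed

lemma concat_inf_offset:
  assumes "j < length (\<tau> k)"
  shows "concat_inf \<tau> (offset \<tau> k + j) = \<tau> k ! j"
proof -
  have "(LEAST k'. offset \<tau> k + j < offset \<tau> (Suc k')) = k"
    using assms by (intro Least_equality offset_add_less_offset_SucD) (simp_all add: offset_Suc)
  then show ?thesis
    by (simp add: concat_inf_def Let_def)
qed

lemma concat_inf_position:
  assumes "\<And>k. \<tau> k \<noteq> []"
  obtains k j where "j < length (\<tau> k)" "i = offset \<tau> k + j"
proof -
  have "i < offset \<tau> (Suc i)"
    using seq_suble[OF strict_mono_offset[of \<tau>, OF assms], of "Suc i"] by simp
  moreover have "\<not> i < offset \<tau> 0"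
    by (simp add: offset_def)
  ultimately obtain k where "offset \<tau> k \<le> i" "i < offset \<tau> (Suc k)"
    using ex_least_nat_less[of "\<lambda>k. i < offset \<tau> k"] by (auto simp: not_less)
  then show thesis
    by (intro that[of "i - offset \<tau> k" k]) (simp_all add: offset_Suc)
qed

lemma concat_inf_no_AP_3:
  fixes \<tau> :: "nat \<Rightarrow> nat list"
  assumes nonempty: "\<And>k. \<tau> k \<noteq> []"
    and blocks: "\<And>k. \<not> list_has_AP 3 (\<tau> k)"
    and across: "\<And>k0 k1 k2 x y z. k0 \<le> k1 \<Longrightarrow> k1 \<le> k2 \<Longrightarrow> k0 < k2 \<Longrightarrow>
      x \<in> set (\<tau> k0) \<Longrightarrow> y \<in> set (\<tau> k1) \<Longrightarrow> z \<in> set (\<tau> k2) \<Longrightarrow> x + z \<noteq> 2 * y"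
  shows "\<not> has_AP 3 (concat_inf \<tau>) UNIV"
proof
  assume "has_AP 3 (concat_inf \<tau>) UNIV"
  then obtain i0 i1 i2 where i: "i0 < i1" "i1 < i2"
    and ne: "concat_inf \<tau> i0 \<noteq> concat_inf \<tau> i1"
    and ap: "concat_inf \<tau> i0 + concat_inf \<tau> i2 = 2 * concat_inf \<tau> i1"
    unfolding has_AP_3_iff by blast
  obtain k0 j0 where p0: "j0 < length (\<tau> k0)" "i0 = offset \<tau> k0 + j0"
    using concat_inf_position[OF nonempty] .
  obtain k1 j1 where p1: "j1 < length (\<tau> k1)" "i1 = offset \<tau> k1 + j1"
    using concat_inf_position[OF nonempty] .
  obtain k2 j2 where p2: "j2 < length (\<tau> k2)" "i2 = offset \<tau> k2 + j2"
    using concat_inf_position[OF nonempty] .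
  have "offset \<tau> k0 + j0 < offset \<tau> (Suc k1)" "offset \<tau> k1 + j1 < offset \<tau> (Suc k2)"
    using i p0 p1 p2 by (simp_all add: offset_Suc)
  then have k: "k0 \<le> k1" "k1 \<le> k2"
    by (simp_all add: offset_add_less_offset_SucD)
  have entries: "concat_inf \<tau> i0 = \<tau> k0 ! j0" "concat_inf \<tau> i1 = \<tau> k1 ! j1"
      "concat_inf \<tau> i2 = \<tau> k2 ! j2"
    using p0 p1 p2 by (simp_all add: concat_inf_offset)
  show False
  proof (cases "k0 = k2")
    case True
    with k have "k0 = k1" "k1 = k2" by simp_all
    then have "list_has_AP 3 (\<tau> k1)"
      unfolding list_has_AP_def has_AP_3_iff using i p0 p1 p2 ne ap entries
      by (intro exI[of _ j0] exI[of _ j1] exI[of _ j2]) auto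
    with blocks show False by blast
  next
    case False
    with k have "k0 < k2" by simp
    from across[OF k this nth_mem[OF p0(1)] nth_mem[OF p1(1)] nth_mem[OF p2(1)]] ap entries
    show False by simp
  qed
qed

lemma bij_betw_concat_inf:
  assumes nonempty: "\<And>k. \<tau> k \<noteq> []"
    and distinct: "\<And>k. distinct (\<tau> k)"
    and disjoint: "\<And>j k. j \<noteq> k \<Longrightarrow> set (\<tau> j) \<inter> set (\<tau> k) = {}"
  shows "bij_betw (concat_inf \<tau>) UNIV (\<Union>k. set (\<tau> k))"
proof (rule bij_betwI')
  fix i i'
  obtain k j where p: "j < length (\<tau> k)" "i = offset \<tau> k + j"
    using concat_inf_position[OF nonempty] .
  obtain k' j' where p': "j' < length (\<tau> k')" "i' = offset \<tau> k' + j'"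
    using concat_inf_position[OF nonempty] .
  show "concat_inf \<tau> i = concat_inf \<tau> i' \<longleftrightarrow> i = i'"
  proof
    assume "concat_inf \<tau> i = concat_inf \<tau> i'"
    then have eq: "\<tau> k ! j = \<tau> k' ! j'"
      using p p' by (simp add: concat_inf_offset)
    have "k = k'"
    proof (rule ccontr)
      assume "k \<noteq> k'"
      with disjoint have "set (\<tau> k) \<inter> set (\<tau> k') = {}" .
      with eq nth_mem[OF p(1)] nth_mem[OF p'(1)] show False
        by auto
    qed
    with eq p p' distinct show "i = i'"
      by (simp add: nth_eq_iff_index_eq)
  qed simp
next
  fix i
  obtain k j where "j < length (\<tau> k)" "i = offset \<tau> k + j"
    using concat_inf_position[OF nonempty] .
  then show "concat_inf \<tau> i \<in> (\<Union>k. set (\<tau> k))"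
    using nth_mem by (auto simp: concat_inf_offset)
next
  fix x assume "x \<in> (\<Union>k. set (\<tau> k))"
  then obtain k where "x \<in> set (\<tau> k)"
    by blast
  then obtain j where "j < length (\<tau> k)" "x = \<tau> k ! j"
    by (metis in_set_conv_nth)
  then show "\<exists>i\<in>UNIV. x = concat_inf \<tau> i"
    by (metis UNIV_I concat_inf_offset)
qed

theorem mainTheorem9:
  fixes \<tau> :: "nat \<Rightarrow> nat list"
  assumes "\<And>k. distinct (\<tau> k)"
      and "\<And>k. set (\<tau> k) = Tblock k"
      and "\<And>k. \<not> list_has_AP 3 (\<tau> k)"
  shows "(\<not> has_AP 3 (concat_inf \<tau>) UNIV \<and> n_free 3 Tset) \<and>
         upper_density Tset = ereal (1/2) \<and> lower_density Tset = ereal (1/4)"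
proof -
  have nonempty: "\<tau> k \<noteq> []" for k
    using assms(2)[of k] pseq_le_qseq[of k] by (auto simp: Tblock_def)
  have no_AP: "\<not> has_AP 3 (concat_inf \<tau>) UNIV"
    using nonempty assms(3)
  proof (rule concat_inf_no_AP_3)
    show "x + z \<noteq> 2 * y"
      if "k0 \<le> k1" "k1 \<le> k2" "k0 < k2" "x \<in> set (\<tau> k0)" "y \<in> set (\<tau> k1)" "z \<in> set (\<tau> k2)"
      for k0 k1 k2 x y z
      using Tblock_no_AP_3_across that unfolding assms(2) .
  qed
  have "bij_betw (concat_inf \<tau>) UNIV Tset"
    using bij_betw_concat_inf[OF nonempty assms(1)] Tblock_disjoint
    by (simp add: assms(2) Tset_def)
  with no_AP have "n_free 3 Tset"
    unfolding n_free_def by blast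
  with no_AP show ?thesis
    using upper_density_Tset lower_density_Tset by simp
qed

end
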